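(* Let $G$ be a joint distribution of $(v,k)$ on $V\times K=[0,1]\times(0,1]$ with strictly positive density $g$, and suppose $G$ satisfies Condition B. Then the mechanism $$\big(f(v,k),p(v,k)\big)=\begin{cases}(0,0,0) & \text{if } v\le \phi_k^{-1}(0),\\ \big(k,1,\phi_k^{-1}(0)\big) & \text{otherwise}\end{cases}$$ is optimal, i.e., it is incentive compatible and individually rational, and its expected revenue $\int_{V\times K}p\,dG$ is at least that of every other incentive compatible and individually rational mechanism.
   Context: A seller has one unit each of two divisible goods. An agent has private type $(v,k)\in V\times K$, $V=[0,1]$, $K=(0,1]$, and from an outcome $(a_1,a_2,t)$ with $a_1,a_2\in[0,1]$ (quantities of good 1 and good 2) and $t\in\mathbb{R}$ (payment by the agent) gets utility $U_{(v,k)}(a_1,a_2,t)=v\min\{a_1/k,a_2\}-t$. A (direct) mechanism is a pair $(f,p)$ with $f=(f_1,f_2):V\times K\to[0,1]^2$ and $p:V\times K\to\mathbb{R}$. It is incentive compatible (IC) if $U_{(v,k)}(f(v,k),p(v,k))\ge U_{(v,k)}(f(v',k'),p(v',k'))$ for all types $(v,k),(v',k')$, and individually rational (IR) if $U_{(v,k)}(f(v,k),p(v,k))\ge 0$ for all $(v,k)$. The type is distributed according to $G$ with strictly positive density $g$; $g_k$ is the marginal density of $k$, and $G(v|k)$, $g(v|k)$ are the conditional distribution and density of $v$ given $k$. Define $\phi(v,k)=v-\frac{1-G(v|k)}{g(v|k)}$. $G$ satisfies Condition A if for every $k$, $v\mapsto v(1-G(v|k))$ is strictly concave on $[0,1]$;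 under Condition A, for each $k$ there is a unique $v\in(0,1)$ with $\phi(v,k)=0$, denoted $\phi_k^{-1}(0)$. $G$ satisfies Condition B if it satisfies Condition A and for all $k<k'$ in $K$: $\frac{k}{k'}\phi_{k'}^{-1}(0)\le \phi_k^{-1}(0)\le \phi_{k'}^{-1}(0)$. *)

theory Defs
  imports "HOL-Analysis.Analysis"
begin

definition typespace :: "(real \<times> real) set" where
  "typespace = {0..1} \<times> {0<..1}"

definition utility :: "real \<times> real \<Rightarrow> real \<times> real \<Rightarrow> real \<Rightarrow> real" where
  "utility vk a t = fst vk * min (fst a / snd vk) (snd a) - t"

definition is_density :: "(real \<times> real \<Rightarrow> real) \<Rightarrow> bool" where
  "is_density g \<longleftrightarrow> continuous_on typespace g \<and> (\<forall>x\<in>typespace. 0 < g x)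
     \<and> set_integrable lborel typespace g \<and> (LINT x:typespace|lborel. g x) = 1"

definition marg_k :: "(real \<times> real \<Rightarrow> real) \<Rightarrow> real \<Rightarrow> real" where
  "marg_k g k = (LINT u:{0..1}|lborel. g (u, k))"

definition cond_cdf :: "(real \<times> real \<Rightarrow> real) \<Rightarrow> real \<Rightarrow> real \<Rightarrow> real" where
  "cond_cdf g v k = (LINT u:{0..v}|lborel. g (u, k)) / marg_k g k"

definition cond_dens :: "(real \<times> real \<Rightarrow> real) \<Rightarrow> real \<Rightarrow> real \<Rightarrow> real" where
  "cond_dens g v k = g (v, k) / marg_k g k"

definition phi :: "(real \<times> real \<Rightarrow> real) \<Rightarrow> real \<Rightarrow> real \<Rightarrow> real" where
  "phi g v k = v - (1 - cond_cdf g v k) / cond_dens g v k"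

definition strictly_concave_on :: "real set \<Rightarrow> (real \<Rightarrow> real) \<Rightarrow> bool" where
  "strictly_concave_on S h \<longleftrightarrow> convex S \<and> (\<forall>x\<in>S. \<forall>y\<in>S. \<forall>t. x \<noteq> y \<and> 0 < t \<and> t < 1 \<longrightarrow>
      t * h x + (1 - t) * h y < h (t * x + (1 - t) * y))"

definition conditionA :: "(real \<times> real \<Rightarrow> real) \<Rightarrow> bool" where
  "conditionA g \<longleftrightarrow> (\<forall>k\<in>{0<..1}. strictly_concave_on {0..1} (\<lambda>v. v * (1 - cond_cdf g v k)))"

definition phi_inv0 :: "(real \<times> real \<Rightarrow> real) \<Rightarrow> real \<Rightarrow> real" where
  "phi_inv0 g k = (THE v. v \<in> {0<..<1} \<and> phi g v k = 0)"

definition conditionB :: "(real \<times> real \<Rightarrow> real) \<Rightarrow> bool" where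
  "conditionB g \<longleftrightarrow> conditionA g \<and>
     (\<forall>k\<in>{0<..1}. \<forall>k'\<in>{0<..1}. k < k' \<longrightarrow>
        k / k' * phi_inv0 g k' \<le> phi_inv0 g k \<and> phi_inv0 g k \<le> phi_inv0 g k')"

definition feasible :: "(real \<times> real \<Rightarrow> real \<times> real) \<Rightarrow> bool" where
  "feasible f \<longleftrightarrow> (\<forall>x\<in>typespace. fst (f x) \<in> {0..1} \<and> snd (f x) \<in> {0..1})"

definition IC :: "(real \<times> real \<Rightarrow> real \<times> real) \<Rightarrow> (real \<times> real \<Rightarrow> real) \<Rightarrow> bool" where
  "IC f p \<longleftrightarrow> (\<forall>x\<in>typespace. \<forall>y\<in>typespace. utility x (f y) (p y) \<le> utility x (f x) (p x))"

definition IR :: "(real \<times> real \<Rightarrow> real \<times> real) \<Rightarrow> (real \<times> real \<Rightarrow> real) \<Rightarrow> bool" where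
  "IR f p \<longleftrightarrow> (\<forall>x\<in>typespace. 0 \<le> utility x (f x) (p x))"

definition revenue :: "(real \<times> real \<Rightarrow> real) \<Rightarrow> (real \<times> real \<Rightarrow> real) \<Rightarrow> real" where
  "revenue g p = (LINT x:typespace|lborel. p x * g x)"

definition f_opt :: "(real \<times> real \<Rightarrow> real) \<Rightarrow> real \<times> real \<Rightarrow> real \<times> real" where
  "f_opt g x = (if fst x \<le> phi_inv0 g (snd x) then (0, 0) else (snd x, 1))"

definition p_opt :: "(real \<times> real \<Rightarrow> real) \<Rightarrow> real \<times> real \<Rightarrow> real" where
  "p_opt g x = (if fst x \<le> phi_inv0 g (snd x) then 0 else phi_inv0 g (snd x))"

end

theory Submission
  imports Defs
begin

text \<open>
  Along the slice \<open>{(v, k) | v}\<close> the agent only cares about the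
  effective quantity \<open>q(v) = min (f\<^sub>1(v,k)/k) (f\<^sub>2(v,k))\<close>, so IC makes q monotone, and chaining
  the IC constraints along a grid of step 1/n bounds the payment by a mixture of posted prices up to an
  error of order 1/n. Hence the revenue on the slice is at most \<open>max\<^sub>s s \<cdot> \<integral>\<^sub>s\<^sup>1 g(u,k) du\<close>. By
  Condition A the revenue curve \<open>v (1 - G(v|k))\<close> is strictly concave, so this maximum is attained
  exactly at its unique stationary point, the zero \<open>\<phi>\<^sub>k\<^sup>-\<^sup>1(0)\<close> of the virtual value, which is
  the price charged by the proposed mechanism. Condition B makes misreporting k unprofitable: a
  lower k' buys the fraction k'/k of one's bundle for at least k'/k times one's own price, and a
  higher k' buys the whole bundle at a higher price. Integrating over k by Fubini gives the theorem.
\<close>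

lemma strictly_concave_onD:
  assumes "strictly_concave_on S h" "x \<in> S" "y \<in> S" "x \<noteq> y" "0 < t" "t < 1"
  shows "t * h x + (1 - t) * h y < h (t * x + (1 - t) * y)"
  using assms unfolding strictly_concave_on_def by blast

lemma strictly_concave_on_cong:
  fixes h h' :: "real \<Rightarrow> real"
  assumes sc: "strictly_concave_on S h" and eq: "\<And>x. x \<in> S \<Longrightarrow> h x = h' x"
  shows "strictly_concave_on S h'"
  unfolding strictly_concave_on_def
proof (intro conjI ballI allI impI)
  show "convex S" using sc by (simp add: strictly_concave_on_def)
  fix x y t :: real assume xy: "x \<in> S" "y \<in> S" and t: "x \<noteq> y \<and> 0 < t \<and> t < 1"
  have "t * x + (1 - t) * y \<in> S"
    using convexD[OF \<open>convex S\<close> xy, of t "1 - t"] t by simp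
  then show "t * h' x + (1 - t) * h' y < h' (t * x + (1 - t) * y)"
    using strictly_concave_onD[OF sc xy, of t] t eq xy by simp
qed

lemma strictly_concave_on_imp_concave_on:
  fixes h :: "real \<Rightarrow> real"
  assumes "strictly_concave_on S h"
  shows "concave_on S h"
  unfolding concave_on_iff
proof (intro conjI ballI allI impI)
  show "convex S" using assms by (simp add: strictly_concave_on_def)
  fix x y u v :: real
  assume xy: "x \<in> S" "y \<in> S" and uv: "0 \<le> u" "0 \<le> v" "u + v = 1"
  show "u * h x + v * h y \<le> h (u *\<^sub>R x + v *\<^sub>R y)"
  proof (cases "x = y \<or> u = 0 \<or> v = 0")
    case True
    then show ?thesis using uv by (auto simp flip: distrib_right)
  next
    case False
    then have "u * h x + (1 - u) * h y < h (u * x + (1 - u) * y)"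
      using uv by (intro strictly_concave_onD[OF assms xy]) auto
    moreover have "v = 1 - u" using uv by simp
    ultimately show ?thesis by simp
  qed
qed

lemma strictly_concave_on_max_unique:
  fixes h :: "real \<Rightarrow> real"
  assumes sc: "strictly_concave_on S h" and "x \<in> S" "y \<in> S"
    and max_x: "\<And>z. z \<in> S \<Longrightarrow> h z \<le> h x" and max_y: "\<And>z. z \<in> S \<Longrightarrow> h z \<le> h y"
  shows "x = y"
proof (rule ccontr)
  assume "x \<noteq> y"
  then have "1/2 * h x + (1 - 1/2) * h y < h (1/2 * x + (1 - 1/2) * y)"
    by (intro strictly_concave_onD[OF sc \<open>x \<in> S\<close> \<open>y \<in> S\<close>]) auto
  moreover have "1/2 * x + (1 - 1/2) * y \<in> S"
    using sc \<open>x \<in> S\<close> \<open>y \<in> S\<close> convexD[of S x y "1/2" "1 - 1/2"]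
    by (simp add: strictly_concave_on_def)
  ultimately show False
    using max_x max_y \<open>x \<in> S\<close> \<open>y \<in> S\<close> by force
qed

lemma strictly_concave_on_Icc_stationary_max:
  fixes h h' :: "real \<Rightarrow> real"
  assumes sc: "strictly_concave_on {a..b} h" and "a < b" and ends: "h a = h b"
    and deriv: "\<And>x. x \<in> {a..b} \<Longrightarrow> (h has_real_derivative h' x) (at x within {a..b})"
  obtains c where "c \<in> {a<..<b}" "h' c = 0" "\<And>r. r \<in> {a<..<b} \<Longrightarrow> h' r = 0 \<Longrightarrow> r = c"
    "\<And>x. x \<in> {a..b} \<Longrightarrow> h x \<le> h c"
proof -
  obtain c where c: "c \<in> {a..b}" and max_c: "\<And>x. x \<in> {a..b} \<Longrightarrow> h x \<le> h c"
    using continuous_attains_sup[OF compact_Icc _ DERIV_continuous_on[OF deriv]] \<open>a < b\<close> by auto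
  have "1/2 * h a + (1 - 1/2) * h b < h (1/2 * a + (1 - 1/2) * b)"
    using \<open>a < b\<close> by (intro strictly_concave_onD[OF sc]) auto
  then have "h a < h c"
    using max_c[of "1/2 * a + (1 - 1/2) * b"] ends \<open>a < b\<close> by auto
  with c ends have c_int: "c \<in> {a<..<b}"
    by (cases "c = a \<or> c = b") auto
  have "h' c = 0"
  proof (rule DERIV_local_max)
    show "(h has_real_derivative h' c) (at c)"
      using deriv[of c] c_int at_within_interior[of c "{a..b}"] by auto
    show "0 < min (c - a) (b - c)" using c_int by auto
    show "\<forall>y. \<bar>c - y\<bar> < min (c - a) (b - c) \<longrightarrow> h y \<le> h c"
      using max_c by (auto simp: abs_if split: if_splits)
  qed
  moreover have "r = c" if r: "r \<in> {a<..<b}" "h' r = 0" for r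
  proof (rule strictly_concave_on_max_unique[OF sc _ c _ max_c])
    fix x assume x: "x \<in> {a..b}"
    have "((\<lambda>x. - h x) has_real_derivative - h' r) (at r within {a..b})"
      using DERIV_minus[OF deriv[of r]] r by auto
    then have "- h' r * (x - r) \<le> - h x - - h r"
      using strictly_concave_on_imp_concave_on[OF sc] r x
      by (intro convex_on_imp_above_tangent) (auto simp: concave_on_def)
    then show "h x \<le> h r" using r by simp
  qed (use r in auto)
  ultimately show ?thesis using that c_int max_c by blast
qed

definition virtual_value :: "(real \<Rightarrow> real) \<Rightarrow> real \<Rightarrow> real" where
  "virtual_value f v = v - (1 - integral {0..v} f / integral {0..1} f) / (f v / integral {0..1} f)"

lemma optimal_posted_price:
  fixes f :: "real \<Rightarrow> real"
  assumes f_cont: "continuous_on {0..1} f" and f_pos: "\<And>v. v \<in> {0..1} \<Longrightarrow> 0 < f v"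
    and conc: "strictly_concave_on {0..1} (\<lambda>v. v * (1 - integral {0..v} f / integral {0..1} f))"
  obtains r where "r \<in> {0<..<1}" "virtual_value f r = 0"
    "\<And>r'. r' \<in> {0<..<1} \<Longrightarrow> virtual_value f r' = 0 \<Longrightarrow> r' = r"
    "\<And>s. s \<in> {0..1} \<Longrightarrow> s * integral {s..1} f \<le> r * integral {r..1} f"
proof -
  define M where "M = integral {0..1} f"
  define h where "h v = v * (1 - integral {0..v} f / M)" for v
  define h' where "h' v = 1 - integral {0..v} f / M - v * f v / M" for v
  have f_int: "f integrable_on {0..1}" by (rule integrable_continuous_interval[OF f_cont])
  obtain m where m: "m \<in> {0..1}" "\<And>v. v \<in> {0..1} \<Longrightarrow> f m \<le> f v"
    using continuous_attains_inf[OF compact_Icc _ f_cont] by auto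
  have "integral {0..1} (\<lambda>_::real. f m) \<le> M"
    unfolding M_def by (rule integral_le[OF _ f_int]) (use m in auto)
  then have M_pos: "0 < M" using f_pos[OF m(1)] by simp
  have h_tail: "M * h s = s * integral {s..1} f" if "s \<in> {0..1}" for s
  proof -
    have "M * h s = s * (M - integral {0..s} f)" using M_pos by (simp add: h_def field_simps)
    also have "M - integral {0..s} f = integral {s..1} f"
      using Henstock_Kurzweil_Integration.integral_combine[OF _ _ f_int, of s] that
      unfolding M_def by auto
    finally show ?thesis .
  qed
  have h'_zero: "h' v = 0 \<longleftrightarrow> virtual_value f v = 0" if "v \<in> {0..1}" for v
  proof -
    have "h' v = - (f v / M) * virtual_value f v"
      using M_pos f_pos[OF that] by (simp add: h'_def virtual_value_def M_def[symmetric] field_simps)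
    then show ?thesis using M_pos f_pos[OF that] by simp
  qed
  have deriv: "(h has_real_derivative h' v) (at v within {0..1})" if "v \<in> {0..1}" for v
  proof -
    have "(h has_real_derivative v * (0 - f v / M) + 1 * (1 - integral {0..v} f / M))
            (at v within {0..1})"
      unfolding h_def
      by (intro DERIV_mult' DERIV_ident DERIV_diff DERIV_const DERIV_cdivide
          integral_has_real_derivative[OF f_cont that])
    moreover have "v * (0 - f v / M) + 1 * (1 - integral {0..v} f / M) = h' v"
      by (simp add: h'_def)
    ultimately show ?thesis by simp
  qed
  have conc_h: "strictly_concave_on {0..1} h" using conc by (simp add: h_def[abs_def] M_def)
  have "h 0 = h 1" using M_pos unfolding h_def M_def by simp
  then obtain r where r: "r \<in> {0<..<1}" "h' r = 0" "\<And>r'. r' \<in> {0<..<1} \<Longrightarrow> h' r' = 0 \<Longrightarrow> r' = r"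
    and max_r: "\<And>s. s \<in> {0..1} \<Longrightarrow> h s \<le> h r"
    using strictly_concave_on_Icc_stationary_max[OF conc_h zero_less_one _ deriv] by blast
  have r01: "r \<in> {0..1}" using r(1) by auto
  show ?thesis
  proof (rule that[OF r(1)])
    show "virtual_value f r = 0" using h'_zero[OF r01] r(2) by simp
    show "r' = r" if "r' \<in> {0<..<1}" "virtual_value f r' = 0" for r'
    proof (rule r(3)[OF that(1)])
      show "h' r' = 0" using h'_zero[of r'] that by simp
    qed
    show "s * integral {s..1} f \<le> r * integral {r..1} f" if "s \<in> {0..1}" for s
    proof -
      have "M * h s \<le> M * h r" using max_r[OF that] M_pos by simp
      then show ?thesis unfolding h_tail[OF that] h_tail[OF r01] .
    qed
  qed
qed

lemma unit_grid_cell: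
  fixes v :: real and n :: nat
  assumes "0 < n" "v \<in> {0..1}"
  obtains j where "j < n" "real j / n \<le> v" "v \<le> real (Suc j) / n"
proof -
  define j where "j = min (nat \<lfloor>v * n\<rfloor>) (n - 1)"
  have "j < n" using assms(1) by (simp add: j_def)
  moreover have "real j \<le> v * n"
    unfolding j_def using assms(2) by (auto simp: min_def) linarith+
  moreover have "v * n \<le> real (Suc j)"
    unfolding j_def using assms by (auto simp: min_def of_nat_diff) linarith+
  ultimately show ?thesis
    using that assms(1) by (simp add: field_simps)
qed

lemma has_integral_step_function_mult:
  fixes f :: "real \<Rightarrow> real"
  assumes "finite I"
    and "\<And>i. i \<in> I \<Longrightarrow> f integrable_on {b i..c i}" "\<And>i. i \<in> I \<Longrightarrow> {b i..c i} \<subseteq> S"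
  shows "((\<lambda>v. (\<Sum>i\<in>I. a i * indicator {b i..c i} v) * f v)
           has_integral (\<Sum>i\<in>I. a i * integral {b i..c i} f)) S"
proof -
  have "((\<lambda>v. indicator {b i..c i} v * f v) has_integral integral {b i..c i} f) S" if "i \<in> I" for i
  proof -
    have "{b i..c i} \<inter> S = {b i..c i}" using assms(3)[OF that] by blast
    then show ?thesis
      unfolding indicator_times_eq_if has_integral_restrict_Int
      using assms(2)[OF that] by (simp add: integrable_integral)
  qed
  then have "((\<lambda>v. \<Sum>i\<in>I. a i * (indicator {b i..c i} v * f v))
               has_integral (\<Sum>i\<in>I. a i * integral {b i..c i} f)) S"
    by (intro has_integral_sum[OF assms(1)] has_integral_mult_right)
  then show ?thesis
    by (simp add: sum_distrib_right mult.assoc)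
qed

lemma ic_allocation_mono:
  fixes q t :: "real \<Rightarrow> real"
  assumes ic: "\<And>v w. v \<in> S \<Longrightarrow> w \<in> S \<Longrightarrow> v * q w - t w \<le> v * q v - t v"
  shows "mono_on S q"
proof (rule mono_onI)
  fix v w assume "v \<in> S" "w \<in> S" "v \<le> w"
  moreover have "0 \<le> (w - v) * (q w - q v)"
    using ic[OF \<open>v \<in> S\<close> \<open>w \<in> S\<close>] ic[OF \<open>w \<in> S\<close> \<open>v \<in> S\<close>] by (simp add: algebra_simps)
  ultimately show "q v \<le> q w"
    by (cases "v = w") (auto simp: zero_le_mult_iff)
qed

lemma ic_payment_le_grid_sum:
  fixes q t :: "real \<Rightarrow> real" and n :: nat
  assumes ic: "\<And>v w. v \<in> {0..1} \<Longrightarrow> w \<in> {0..1} \<Longrightarrow> v * q w - t w \<le> v * q v - t v"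
    and t0: "t 0 \<le> 0" and n: "0 < n" and v: "v \<in> {0..1}"
  shows "t v \<le> (\<Sum>i<n. real (Suc i) / n * (q (real (Suc i) / n) - q (real i / n))
                        * indicator {real i / n..1} v)"
proof -
  define w where "w i = real i / n" for i
  define a where "a i = w (Suc i) * (q (w (Suc i)) - q (w i))" for i
  have mono: "mono_on {0..1} q" by (rule ic_allocation_mono[OF ic])
  have w01: "w i \<in> {0..1}" if "i \<le> n" for i
    using that n by (simp add: w_def)
  have w_mono: "w i \<le> w j" if "i \<le> j" for i j
    using that by (simp add: w_def divide_right_mono)
  have a_nonneg: "0 \<le> a i" if "i < n" for i
    using that w01[of i] w01[of "Suc i"] mono_onD[OF mono, of "w i" "w (Suc i)"] w_mono[of i "Suc i"]
    by (simp add: a_def)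
  have chain: "t (w j) \<le> (\<Sum>i<j. a i)" if "j \<le> n" for j
    using that
  proof (induction j)
    case 0
    then show ?case using t0 by (simp add: w_def)
  next
    case (Suc j)
    have "t (w (Suc j)) \<le> t (w j) + a j"
      using ic[OF w01 w01, of "Suc j" j] Suc.prems by (simp add: a_def algebra_simps)
    then show ?case using Suc by simp
  qed
  obtain j where j: "j < n" "w j \<le> v" "v \<le> w (Suc j)"
    using unit_grid_cell[OF n v] unfolding w_def .
  have qv: "q (w j) \<le> q v" "q v \<le> q (w (Suc j))"
    using j v w01[of j] w01[of "Suc j"] by (auto intro: mono_onD[OF mono])
  have "t v \<le> t (w j) + v * (q v - q (w j))"
    using ic[OF v w01, of j] j by (simp add: algebra_simps)
  also have "v * (q v - q (w j)) \<le> a j"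
    unfolding a_def using j qv v by (intro mult_mono) auto
  also have "t (w j) + a j \<le> (\<Sum>i<Suc j. a i)"
    using chain[of j] j by simp
  also have "\<dots> = (\<Sum>i<Suc j. a i * indicator {w i..1} v)"
  proof (rule sum.cong)
    fix i assume "i \<in> {..<Suc j}"
    then have "w i \<le> v" using w_mono[of i j] j by simp
    then show "a i = a i * indicator {w i..1} v" using v by simp
  qed simp
  also have "\<dots> \<le> (\<Sum>i<n. a i * indicator {w i..1} v)"
    using j a_nonneg by (intro sum_mono2) auto
  finally show ?thesis by (simp add: a_def w_def)
qed

lemma ic_revenue_le_posted_price_mixture:
  fixes q t f :: "real \<Rightarrow> real" and n :: nat
  assumes f_cont: "continuous_on {0..1} f" and f_nonneg: "\<And>v. v \<in> {0..1} \<Longrightarrow> 0 \<le> f v"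
    and ic: "\<And>v w. v \<in> {0..1} \<Longrightarrow> w \<in> {0..1} \<Longrightarrow> v * q w - t w \<le> v * q v - t v"
    and t0: "t 0 \<le> 0" and n: "0 < n"
    and t_int: "(\<lambda>v. t v * f v) integrable_on {0..1}"
  shows "integral {0..1} (\<lambda>v. t v * f v)
           \<le> (\<Sum>i<n. (q (real (Suc i) / n) - q (real i / n))
                      * (real (Suc i) / n * integral {real i / n..1} f))"
proof -
  define w where "w i = real i / n" for i
  define a where "a i = w (Suc i) * (q (w (Suc i)) - q (w i))" for i
  have "((\<lambda>v. (\<Sum>i<n. a i * indicator {w i..1} v) * f v)
          has_integral (\<Sum>i<n. a i * integral {w i..1} f)) {0..1}"
    using n by (intro has_integral_step_function_mult integrable_continuous_interval
        continuous_on_subset[OF f_cont]) (auto simp: w_def)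
  then have "integral {0..1} (\<lambda>v. t v * f v) \<le> (\<Sum>i<n. a i * integral {w i..1} f)"
  proof (rule has_integral_le[OF integrable_integral[OF t_int]])
    fix v :: real assume "v \<in> {0..1}"
    with ic_payment_le_grid_sum[OF ic t0 n] f_nonneg
    show "t v * f v \<le> (\<Sum>i<n. a i * indicator {w i..1} v) * f v"
      by (auto simp: w_def a_def intro: mult_right_mono)
  qed
  then show ?thesis by (simp add: a_def w_def ac_simps)
qed

lemma ic_revenue_le_posted_price_revenue:
  fixes q t f :: "real \<Rightarrow> real" and R :: real
  assumes f_cont: "continuous_on {0..1} f" and f_nonneg: "\<And>v. v \<in> {0..1} \<Longrightarrow> 0 \<le> f v"
    and q01: "\<And>v. v \<in> {0..1} \<Longrightarrow> 0 \<le> q v \<and> q v \<le> 1"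
    and ic: "\<And>v w. v \<in> {0..1} \<Longrightarrow> w \<in> {0..1} \<Longrightarrow> v * q w - t w \<le> v * q v - t v"
    and t0: "t 0 \<le> 0"
    and R: "\<And>s. s \<in> {0..1} \<Longrightarrow> s * integral {s..1} f \<le> R"
    and t_int: "(\<lambda>v. t v * f v) integrable_on {0..1}"
  shows "integral {0..1} (\<lambda>v. t v * f v) \<le> R"
proof -
  define M where "M = integral {0..1} f"
  have f_int: "f integrable_on {s..1}" if "s \<in> {0..1}" for s
    using that by (intro integrable_continuous_interval continuous_on_subset[OF f_cont]) auto
  have R_nonneg: "0 \<le> R" using R[of 0] by simp
  have tail_le_M: "integral {s..1} f \<le> M" if "s \<in> {0..1}" for s
    unfolding M_def using that f_int[of s] f_int[of 0] f_nonneg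
    by (intro integral_subset_le) auto
  have M_nonneg: "0 \<le> M"
    unfolding M_def using f_nonneg by (intro integral_nonneg[OF f_int[of 0]]) auto
  have q_mono: "mono_on {0..1} q" by (rule ic_allocation_mono[OF ic])
  have bound: "integral {0..1} (\<lambda>v. t v * f v) \<le> R + M / n" if n: "0 < n" for n :: nat
  proof -
    define w where "w i = real i / n" for i
    define D where "D i = q (w (Suc i)) - q (w i)" for i
    have w01: "w i \<in> {0..1}" if "i \<le> n" for i
      using that n by (simp add: w_def)
    have "integral {0..1} (\<lambda>v. t v * f v) \<le> (\<Sum>i<n. D i * (w (Suc i) * integral {w i..1} f))"
      using ic_revenue_le_posted_price_mixture[OF f_cont f_nonneg ic t0 n t_int]
      by (simp add: D_def w_def)
    also have "\<dots> \<le> (\<Sum>i<n. D i * (R + M / n))"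
    proof (intro sum_mono mult_left_mono)
      fix i assume i: "i \<in> {..<n}"
      show "0 \<le> D i"
        using mono_onD[OF q_mono, of "w i" "w (Suc i)"] w01[of i] w01[of "Suc i"] i
        by (simp add: D_def w_def divide_right_mono)
      have "w (Suc i) * integral {w i..1} f = w i * integral {w i..1} f + integral {w i..1} f / n"
        by (simp add: w_def add_divide_distrib distrib_right)
      also have "\<dots> \<le> R + M / n"
        using R[OF w01] tail_le_M[OF w01] i by (intro add_mono divide_right_mono) auto
      finally show "w (Suc i) * integral {w i..1} f \<le> R + M / n" .
    qed
    also have "\<dots> = (q 1 - q 0) * (R + M / n)"
      using sum_lessThan_telescope[of "\<lambda>i. q (w i)" n] n
      by (simp add: D_def w_def flip: sum_distrib_right)
    also have "\<dots> \<le> R + M / n"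
      using q01[of 0] q01[of 1] mono_onD[OF q_mono, of 0 1] R_nonneg M_nonneg
      by (intro mult_left_le_one_le add_nonneg_nonneg divide_nonneg_nonneg) auto
    finally show ?thesis .
  qed
  have "(\<lambda>n. R + M / real n) \<longlonglongrightarrow> R"
    using tendsto_add[OF tendsto_const lim_const_over_n[of M]] by simp
  then show ?thesis
    by (rule LIMSEQ_le_const) (use bound in \<open>auto intro!: exI[of _ 1]\<close>)
qed

lemma density_slice_continuous:
  assumes "is_density g" "k \<in> {0<..1}"
  shows "continuous_on {0..1} (\<lambda>u. g (u, k))"
proof (rule continuous_on_compose2[of typespace g])
  show "continuous_on typespace g" using assms(1) by (simp add: is_density_def)
  show "continuous_on {0..1} (\<lambda>u. (u, k))" by (intro continuous_intros)
  show "(\<lambda>u. (u, k)) ` {0..1} \<subseteq> typespace" using assms(2) by (auto simp: typespace_def)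
qed

lemma density_slice_pos:
  assumes "is_density g" "k \<in> {0<..1}" "u \<in> {0..1}"
  shows "0 < g (u, k)"
  using assms by (simp add: is_density_def typespace_def)

lemma density_slice_set_integral:
  assumes "is_density g" "k \<in> {0<..1}" "v \<in> {0..1}"
  shows "(LINT u:{0..v}|lborel. g (u, k)) = integral {0..v} (\<lambda>u. g (u, k))"
proof -
  have "continuous_on {0..v} (\<lambda>u. g (u, k))"
    by (rule continuous_on_subset[OF density_slice_continuous[OF assms(1,2)]]) (use assms(3) in auto)
  then have "set_integrable lborel {0..v} (\<lambda>u. g (u, k))"
    unfolding set_integrable_def by (rule borel_integrable_compact[OF compact_Icc])
  then show ?thesis by (rule set_borel_integral_eq_integral(2))
qed

lemma phi_eq_virtual_value:
  assumes "is_density g" "k \<in> {0<..1}" "v \<in> {0..1}"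
  shows "phi g v k = virtual_value (\<lambda>u. g (u, k)) v"
  using density_slice_set_integral[OF assms] density_slice_set_integral[OF assms(1,2), of 1]
  by (simp add: phi_def cond_cdf_def cond_dens_def marg_k_def virtual_value_def)

lemma phi_inv0_optimal_price:
  assumes dens: "is_density g" and A: "conditionA g" and k: "k \<in> {0<..1}"
  shows "phi_inv0 g k \<in> {0<..<1}"
    and "\<And>s. s \<in> {0..1} \<Longrightarrow> s * integral {s..1} (\<lambda>u. g (u, k))
            \<le> phi_inv0 g k * integral {phi_inv0 g k..1} (\<lambda>u. g (u, k))"
proof -
  have sc: "strictly_concave_on {0..1} (\<lambda>v. v * (1 - cond_cdf g v k))"
    using A k by (simp add: conditionA_def)
  have cdf: "cond_cdf g v k = integral {0..v} (\<lambda>u. g (u, k)) / integral {0..1} (\<lambda>u. g (u, k))"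
    if "v \<in> {0..1}" for v
    using density_slice_set_integral[OF dens k that] density_slice_set_integral[OF dens k, of 1]
    by (simp add: cond_cdf_def marg_k_def)
  have "strictly_concave_on {0..1}
      (\<lambda>v. v * (1 - integral {0..v} (\<lambda>u. g (u, k)) / integral {0..1} (\<lambda>u. g (u, k))))"
    by (rule strictly_concave_on_cong[OF sc]) (simp add: cdf)
  then obtain r where r: "r \<in> {0<..<1}" "virtual_value (\<lambda>u. g (u, k)) r = 0"
    "\<And>r'. r' \<in> {0<..<1} \<Longrightarrow> virtual_value (\<lambda>u. g (u, k)) r' = 0 \<Longrightarrow> r' = r"
    "\<And>s. s \<in> {0..1} \<Longrightarrow> s * integral {s..1} (\<lambda>u. g (u, k)) \<le> r * integral {r..1} (\<lambda>u. g (u, k))"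
    using optimal_posted_price[OF density_slice_continuous[OF dens k] density_slice_pos[OF dens k]]
    by blast
  have "phi_inv0 g k = r"
    unfolding phi_inv0_def
  proof (rule the_equality)
    show "r \<in> {0<..<1} \<and> phi g r k = 0"
      using r(1,2) phi_eq_virtual_value[OF dens k, of r] by simp
    show "r' = r" if "r' \<in> {0<..<1} \<and> phi g r' k = 0" for r'
      using r(3)[of r'] phi_eq_virtual_value[OF dens k, of r'] that by simp
  qed
  with r(1,4) show "phi_inv0 g k \<in> {0<..<1}"
    "\<And>s. s \<in> {0..1} \<Longrightarrow> s * integral {s..1} (\<lambda>u. g (u, k))
            \<le> phi_inv0 g k * integral {phi_inv0 g k..1} (\<lambda>u. g (u, k))"
    by simp_all
qed

lemma phi_inv0_mono_on:
  assumes "conditionB g"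
  shows "mono_on {0<..1} (phi_inv0 g)"
proof (rule mono_onI)
  fix k k' :: real assume "k \<in> {0<..1}" "k' \<in> {0<..1}" "k \<le> k'"
  then show "phi_inv0 g k \<le> phi_inv0 g k'"
    using assms unfolding conditionB_def by (cases "k = k'") auto
qed

lemma phi_inv0_scaled_le:
  assumes "conditionB g" "k \<in> {0<..1}" "k' \<in> {0<..1}" "k' < k"
  shows "k' / k * phi_inv0 g k \<le> phi_inv0 g k'"
  using assms unfolding conditionB_def by blast

lemma misreport_utility_le:
  fixes v k k' r r' :: real
  assumes "0 \<le> v" "0 < k" "0 < k'"
    and higher: "k \<le> k' \<Longrightarrow> r \<le> r'" and lower: "k' < k \<Longrightarrow> k' / k * r \<le> r'"
  shows "v * min (k' / k) 1 - r' \<le> max 0 (v - r)"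
proof (cases "k \<le> k'")
  case True
  then show ?thesis using assms by simp
next
  case False
  then have l: "0 < k' / k" "k' / k < 1" using assms by auto
  have "v * min (k' / k) 1 - r' \<le> k' / k * (v - r)"
    using lower False l by (simp add: min_absorb1 right_diff_distrib diff_divide_distrib mult.commute)
  also have "\<dots> \<le> max 0 (v - r)"
  proof (cases "v \<le> r")
    case True
    then show ?thesis using mult_nonneg_nonpos[of "k' / k" "v - r"] l by simp
  next
    case False
    then show ?thesis using mult_left_le_one_le[of "v - r" "k' / k"] l by simp
  qed
  finally show ?thesis .
qed

lemma utility_f_opt:
  "utility x (f_opt g y) (p_opt g y)
     = (if fst y \<le> phi_inv0 g (snd y) then 0 else fst x * min (snd y / snd x) 1 - phi_inv0 g (snd y))"
  by (simp add: utility_def f_opt_def p_opt_def)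

lemma f_opt_p_opt_IC_IR:
  assumes B: "conditionB g"
  shows "feasible (f_opt g) \<and> IC (f_opt g) (p_opt g) \<and> IR (f_opt g) (p_opt g)"
proof -
  have truthful: "utility x (f_opt g x) (p_opt g x) = max 0 (fst x - phi_inv0 g (snd x))"
    if "x \<in> typespace" for x
    using that by (auto simp: utility_f_opt typespace_def)
  have "feasible (f_opt g)"
    by (auto simp: feasible_def f_opt_def typespace_def)
  moreover have "IC (f_opt g) (p_opt g)"
    unfolding IC_def
  proof (intro ballI)
    fix x y assume x: "x \<in> typespace" and y: "y \<in> typespace"
    obtain v k k' where "x = (v, k)" "snd y = k'" "0 \<le> v" "k \<in> {0<..1}" "k' \<in> {0<..1}"
      using x y by (cases x) (auto simp: typespace_def)
    then have "fst x * min (snd y / snd x) 1 - phi_inv0 g (snd y) \<le> max 0 (fst x - phi_inv0 g (snd x))"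
      using mono_onD[OF phi_inv0_mono_on[OF B]] phi_inv0_scaled_le[OF B]
      by (intro misreport_utility_le) auto
    then have "utility x (f_opt g y) (p_opt g y) \<le> max 0 (fst x - phi_inv0 g (snd x))"
      by (simp add: utility_f_opt)
    then show "utility x (f_opt g y) (p_opt g y) \<le> utility x (f_opt g x) (p_opt g x)"
      unfolding truthful[OF x] .
  qed
  moreover have "IR (f_opt g) (p_opt g)"
    by (simp add: IR_def truthful)
  ultimately show ?thesis by blast
qed

lemma p_opt_set_integrable:
  assumes dens: "is_density g" and B: "conditionB g"
  shows "set_integrable lborel typespace (\<lambda>x. p_opt g x * g x)"
proof (rule set_integrable_bound)
  show g_int: "set_integrable lborel typespace g"
    using dens by (simp add: is_density_def)
  define \<rho> where "\<rho> k = (if k \<in> {0<..1} then phi_inv0 g k else 0)" for k :: real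
  have [measurable]: "\<rho> \<in> borel_measurable borel"
    using borel_measurable_mono_on_fnc[OF phi_inv0_mono_on[OF B]]
      measurable_restrict_space_iff[of "{0<..1}" borel 0 borel "phi_inv0 g"]
    by (simp add: \<rho>_def[abs_def])
  have "(\<lambda>x. if fst x \<le> \<rho> (snd x) then 0 else \<rho> (snd x)) \<in> borel_measurable (borel \<Otimes>\<^sub>M borel)"
    by measurable
  then have "(\<lambda>x. if fst x \<le> \<rho> (snd x) then 0 else \<rho> (snd x)) \<in> borel_measurable lborel"
    by (simp add: borel_prod measurable_lborel1)
  then have "(\<lambda>x. (if fst x \<le> \<rho> (snd x) then 0 else \<rho> (snd x)) * (indicator typespace x *\<^sub>R g x))
          \<in> borel_measurable lborel"
    using borel_measurable_integrable[OF g_int[unfolded set_integrable_def]]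
    by (rule borel_measurable_times)
  moreover have "(\<lambda>x. indicator typespace x *\<^sub>R (p_opt g x * g x))
      = (\<lambda>x. (if fst x \<le> \<rho> (snd x) then 0 else \<rho> (snd x)) * (indicator typespace x *\<^sub>R g x))"
    by (auto simp: fun_eq_iff \<rho>_def p_opt_def typespace_def indicator_def)
  ultimately show "set_borel_measurable lborel typespace (\<lambda>x. p_opt g x * g x)"
    unfolding set_borel_measurable_def by simp
  have "\<bar>p_opt g x\<bar> \<le> 1" if "x \<in> typespace" for x
    using phi_inv0_optimal_price(1)[OF dens _, of "snd x"] B that
    by (auto simp: p_opt_def conditionB_def typespace_def)
  then show "AE x in lborel. x \<in> typespace \<longrightarrow> norm (p_opt g x * g x) \<le> norm (g x)"
    by (auto simp: abs_mult intro!: mult_left_le_one_le)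
qed

lemma set_integral_Times_mono_slices:
  fixes h1 h2 :: "real \<times> real \<Rightarrow> real"
  assumes int1: "set_integrable lborel (A \<times> B) h1" and int2: "set_integrable lborel (A \<times> B) h2"
    and slices: "\<And>k. k \<in> B \<Longrightarrow> set_integrable lborel A (\<lambda>v. h1 (v, k)) \<Longrightarrow>
      set_integrable lborel A (\<lambda>v. h2 (v, k)) \<Longrightarrow>
      (LINT v:A|lborel. h1 (v, k)) \<le> (LINT v:A|lborel. h2 (v, k))"
  shows "(LINT x:A \<times> B|lborel. h1 x) \<le> (LINT x:A \<times> B|lborel. h2 x)"
proof -
  define F1 where "F1 v k = indicator (A \<times> B) (v, k) *\<^sub>R h1 (v, k)" for v k
  define F2 where "F2 v k = indicator (A \<times> B) (v, k) *\<^sub>R h2 (v, k)" for v k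
  have I1: "integrable (lborel \<Otimes>\<^sub>M lborel) (case_prod F1)"
    using int1 by (simp add: set_integrable_def F1_def lborel_prod case_prod_beta')
  have I2: "integrable (lborel \<Otimes>\<^sub>M lborel) (case_prod F2)"
    using int2 by (simp add: set_integrable_def F2_def lborel_prod case_prod_beta')
  have "(LINT x:A \<times> B|lborel. h1 x) = (\<integral>k. (\<integral>v. F1 v k \<partial>lborel) \<partial>lborel)"
    unfolding lborel_pair.integral_snd[OF I1]
    by (simp add: set_lebesgue_integral_def F1_def lborel_prod case_prod_beta')
  also have "\<dots> \<le> (\<integral>k. (\<integral>v. F2 v k \<partial>lborel) \<partial>lborel)"
  proof (rule integral_mono_AE[OF lborel_pair.integrable_snd[OF I1] lborel_pair.integrable_snd[OF I2]])
    show "AE k in lborel. (\<integral>v. F1 v k \<partial>lborel) \<le> (\<integral>v. F2 v k \<partial>lborel)"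
      using lborel_pair.AE_integrable_snd[OF I1] lborel_pair.AE_integrable_snd[OF I2]
    proof eventually_elim
      case (elim k)
      show ?case
      proof (cases "k \<in> B")
        case True
        then have "F1 v k = indicator A v *\<^sub>R h1 (v, k)" "F2 v k = indicator A v *\<^sub>R h2 (v, k)" for v
          by (simp_all add: F1_def F2_def indicator_def)
        with elim True slices[of k] show ?thesis
          by (simp add: set_integrable_def set_lebesgue_integral_def)
      qed (simp add: F1_def F2_def)
    qed
  qed
  also have "\<dots> = (LINT x:A \<times> B|lborel. h2 x)"
    unfolding lborel_pair.integral_snd[OF I2]
    by (simp add: set_lebesgue_integral_def F2_def lborel_prod case_prod_beta')
  finally show ?thesis .
qed

lemma slice_revenue_le_optimal_price:
  assumes dens: "is_density g" and A: "conditionA g"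
    and feas: "feasible f" and ic: "IC f p" and ir: "IR f p" and k: "k \<in> {0<..1}"
    and int: "set_integrable lborel {0..1} (\<lambda>v. p (v, k) * g (v, k))"
  shows "(LINT v:{0..1}|lborel. p (v, k) * g (v, k))
           \<le> phi_inv0 g k * integral {phi_inv0 g k..1} (\<lambda>u. g (u, k))"
proof -
  define q where "q w = min (fst (f (w, k)) / k) (snd (f (w, k)))" for w
  have type: "(v, k) \<in> typespace" if "v \<in> {0..1}" for v
    using that k by (simp add: typespace_def)
  have "integral {0..1} (\<lambda>v. p (v, k) * g (v, k))
          \<le> phi_inv0 g k * integral {phi_inv0 g k..1} (\<lambda>u. g (u, k))"
  proof (rule ic_revenue_le_posted_price_revenue[where q = q])
    show "continuous_on {0..1} (\<lambda>u. g (u, k))" by (rule density_slice_continuous[OF dens k])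
    show "0 \<le> g (v, k)" if "v \<in> {0..1}" for v
      using density_slice_pos[OF dens k that] by simp
    show "0 \<le> q v \<and> q v \<le> 1" if "v \<in> {0..1}" for v
      using feas type[OF that] k by (auto simp: feasible_def q_def min_le_iff_disj)
    show "v * q w - p (w, k) \<le> v * q v - p (v, k)" if "v \<in> {0..1}" "w \<in> {0..1}" for v w
      using ic type[OF that(1)] type[OF that(2)] by (auto simp: IC_def utility_def q_def)
    show "p (0, k) \<le> 0"
      using ir type[of 0] by (auto simp: IR_def utility_def)
    show "s * integral {s..1} (\<lambda>u. g (u, k))
            \<le> phi_inv0 g k * integral {phi_inv0 g k..1} (\<lambda>u. g (u, k))" if "s \<in> {0..1}" for s
      by (rule phi_inv0_optimal_price(2)[OF dens A k that])
    show "(\<lambda>v. p (v, k) * g (v, k)) integrable_on {0..1}"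
      by (rule set_borel_integral_eq_integral(1)[OF int])
  qed
  then show ?thesis by (simp add: set_borel_integral_eq_integral(2)[OF int])
qed

lemma slice_revenue_p_opt:
  assumes dens: "is_density g" and A: "conditionA g" and k: "k \<in> {0<..1}"
    and int: "set_integrable lborel {0..1} (\<lambda>v. p_opt g (v, k) * g (v, k))"
  shows "(LINT v:{0..1}|lborel. p_opt g (v, k) * g (v, k))
           = phi_inv0 g k * integral {phi_inv0 g k..1} (\<lambda>u. g (u, k))"
proof -
  define r where "r = phi_inv0 g k"
  have r: "r \<in> {0<..<1}" using phi_inv0_optimal_price(1)[OF dens A k] by (simp add: r_def)
  have "integral {0..1} (\<lambda>v. p_opt g (v, k) * g (v, k))
          = integral {0..1} (\<lambda>v. if v \<in> {r..1} then r * g (v, k) else 0)"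
    by (rule integral_spike[OF negligible_sing[of r]]) (auto simp: p_opt_def r_def)
  also have "\<dots> = r * integral {r..1} (\<lambda>u. g (u, k))"
    unfolding integral_restrict_Int using r by (simp add: Int_absorb2)
  finally show ?thesis
    by (simp add: set_borel_integral_eq_integral(2)[OF int] r_def)
qed

theorem theorem1:
  fixes g :: "real \<times> real \<Rightarrow> real"
  assumes "is_density g"
    and "conditionB g"
  shows "feasible (f_opt g) \<and> IC (f_opt g) (p_opt g) \<and> IR (f_opt g) (p_opt g)
    \<and> set_integrable lborel typespace (\<lambda>x. p_opt g x * g x)
    \<and> (\<forall>f p. feasible f \<and> IC f p \<and> IR f p \<and> set_integrable lborel typespace (\<lambda>x. p x * g x)
           \<longrightarrow> revenue g p \<le> revenue g (p_opt g))"
proof -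
  have A: "conditionA g" using assms(2) by (simp add: conditionB_def)
  have opt_int: "set_integrable lborel typespace (\<lambda>x. p_opt g x * g x)"
    by (rule p_opt_set_integrable[OF assms])
  have "revenue g p \<le> revenue g (p_opt g)"
    if "feasible f" "IC f p" "IR f p" "set_integrable lborel typespace (\<lambda>x. p x * g x)" for f p
    unfolding revenue_def
  proof (rule set_integral_Times_mono_slices[OF that(4)[unfolded typespace_def]
        opt_int[unfolded typespace_def], folded typespace_def])
    fix k :: real
    assume k: "k \<in> {0<..1}"
      and "set_integrable lborel {0..1} (\<lambda>v. p (v, k) * g (v, k))"
      and "set_integrable lborel {0..1} (\<lambda>v. p_opt g (v, k) * g (v, k))"
    with slice_revenue_le_optimal_price[OF assms(1) A that(1-3) k] slice_revenue_p_opt[OF assms(1) A k]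
    show "(LINT v:{0..1}|lborel. p (v, k) * g (v, k))
            \<le> (LINT v:{0..1}|lborel. p_opt g (v, k) * g (v, k))"
      by simp
  qed
  then show ?thesis
    using f_opt_p_opt_IC_IR[OF assms(2)] opt_int by blast
qed

end
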